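(* Let $d\ge2$ and consider the cubical cell structure on $\mathbb{R}^d$ given by $\mathbb{Z}^d$. For all $(d-1)$-cells $c,c'$, $$S_cS_{c'}=S_{c'}S_c\,(-1)^{\int\boldsymbol c\cup_{d-2}\boldsymbol c'+\boldsymbol c'\cup_{d-2}\boldsymbol c}$$ and $$U_cU_{c'}=U_{c'}U_c\,(-1)^{\int\boldsymbol c\cup_{d-2}\boldsymbol c'+\boldsymbol c'\cup_{d-2}\boldsymbol c},$$ where $S_c$ and $U_c$ are the operators defined in the context.
   Context: Cells: the $k$-cells are integer translates of faces of unit cubes of $\mathbb{Z}^d$. For a $k$-cell $c$ spanning directions $i_1<\dots<i_k$, its subcells are $c(w)$ for $w\in\{+,-,\bullet\}^k$: $w_r=\pm$ fixes $x_{i_r}$ at its max/min on $c$, and $w_r=\bullet$ leaves it free. A $\mathbb{Z}_2$-valued $p$-cochain is a function from $p$-cells to $\mathbb{Z}_2$, zero on other cells. $\boldsymbol c$ denotes the indicator cochain of the cell $c$. $\int\phi$ of a $d$-cochain $\phi$ is $\sum_{d\text{-cells}}\phi$ mod 2. Higher cup products: for a $p$-cochain $\alpha$, a $q$-cochain $\beta$, and a $k$-cell $c$ with $k=p+q-m$, $$(\alpha\cup_m\beta)(c)=\sum_{1\le l_1<\dots<l_m\le k}\sum_{(w,w')}\alpha(c(w))\beta(c(w')).$$ The inner sum runs over pairs with $w_{l_r}=w'_{l_r}=\bullet$. At every other position $s$, with $\ell(s)=\#\{r:l_r<s\}$ and $\sigma_s=(-1)^{\ell(s)}\in\{\pm\}$,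 one has $(w_s,w'_s)\in\{(\sigma_s,\bullet),(\bullet,-\sigma_s)\}$. Faces of the wrong dimension contribute zero. Fermions: each $d$-cell $C$ carries two Majorana operators $\gamma_C,\gamma'_C$. All of them are Hermitian, square to $1$ and pairwise anticommute. For a $(d-1)$-cell $c$ perpendicular to the $x_i$-direction, let ${}^\pm c$ be the $d$-cell adjacent to $c$ in the $\pm x_i$ direction. Set $(L(c),R(c))=({}^-c,{}^+c)$ if $i+d$ is odd, and $(L(c),R(c))=({}^+c,{}^-c)$ if $i+d$ is even. Define $S_c=i\gamma_{L(c)}\gamma'_{R(c)}$. Bosons: each $(d-1)$-cell $c$ carries a qubit with Pauli operators $X_c,Z_c$ (operators on distinct cells commute). Define $$U_c=X_c\prod_{c'}Z_{c'}^{\int\boldsymbol c'\cup_{d-2}\boldsymbol c},$$ with the product over all $(d-1)$-cells $c'$. *)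

theory Defs
  imports Main
begin

text \<open>A cell of the cubical structure on R^d given by Z^d: a pair (x, S) where
  x is the (integer) minimal corner and S \<subseteq> {1..d} is the set of spanning
  directions; the cell is x + [0,1]^S.  Coordinates are indexed 1..d, and x is
  normalised to 0 outside {1..d}.\<close>
type_synonym cell = "(nat \<Rightarrow> int) \<times> nat set"

definition is_cell :: "nat \<Rightarrow> nat \<Rightarrow> cell \<Rightarrow> bool" where
  "is_cell d k c \<longleftrightarrow> snd c \<subseteq> {1..d} \<and> card (snd c) = k \<and>
     (\<forall>i. i \<notin> {1..d} \<longrightarrow> fst c i = 0)"

text \<open>Z2-valued cochains are represented as functions cell => nat with values in {0,1}.\<close>
definition ind :: "cell \<Rightarrow> cell \<Rightarrow> nat" where
  "ind c = (\<lambda>c'. if c' = c then 1 else 0)"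

text \<open>ell L s = number of elements of L below s; sigma_s = + iff ell L s is even.\<close>
definition ell :: "nat set \<Rightarrow> nat \<Rightarrow> nat" where
  "ell L s = card {l \<in> L. l < s}"

text \<open>Subcell with the coordinates in F fixed: direction i in F is fixed at its
  max (+) if P i, at its min (-) otherwise; other directions remain free.\<close>
definition subcell :: "cell \<Rightarrow> nat set \<Rightarrow> (nat \<Rightarrow> bool) \<Rightarrow> cell" where
  "subcell c F P = ((\<lambda>i. if i \<in> F \<and> P i then fst c i + 1 else fst c i), snd c - F)"

text \<open>Positions l_1<...<l_m are identified with the
  subset L of spanning directions (the order-preserving correspondence), and
  for each s not in L the choice (w_s,w'_s) = (sigma_s, free) is encoded by s \<in> T,
  the choice (free, -sigma_s) by s \<in> S - L - T.\<close>
definition cup :: "nat \<Rightarrow> (cell \<Rightarrow> nat) \<Rightarrow> (cell \<Rightarrow> nat) \<Rightarrow> cell \<Rightarrow> nat" where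
  "cup m \<alpha> \<beta> c =
     (\<Sum>L \<in> {L. L \<subseteq> snd c \<and> card L = m}. \<Sum>T \<in> Pow (snd c - L).
        \<alpha> (subcell c T (\<lambda>s. even (ell L s))) *
        \<beta> (subcell c (snd c - L - T) (\<lambda>s. odd (ell L s)))) mod 2"

definition integral_d :: "nat \<Rightarrow> (cell \<Rightarrow> nat) \<Rightarrow> nat" where
  "integral_d d \<phi> = card {C. is_cell d d C \<and> odd (\<phi> C)} mod 2"

definition cupint :: "nat \<Rightarrow> cell \<Rightarrow> cell \<Rightarrow> nat" where
  "cupint d c c' = integral_d d (cup (d - 2) (ind c) (ind c'))"

definition perp :: "nat \<Rightarrow> cell \<Rightarrow> nat" where
  "perp d c = (THE i. i \<in> {1..d} \<and> i \<notin> snd c)"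

definition adj_plus :: "nat \<Rightarrow> cell \<Rightarrow> cell" where
  "adj_plus d c = (fst c, {1..d})"

definition adj_minus :: "nat \<Rightarrow> cell \<Rightarrow> cell" where
  "adj_minus d c = ((fst c)(perp d c := fst c (perp d c) - 1), {1..d})"

definition Lc :: "nat \<Rightarrow> cell \<Rightarrow> cell" where
  "Lc d c = (if odd (perp d c + d) then adj_minus d c else adj_plus d c)"

definition Rc :: "nat \<Rightarrow> cell \<Rightarrow> cell" where
  "Rc d c = (if odd (perp d c + d) then adj_plus d c else adj_minus d c)"

definition Sop :: "nat \<Rightarrow> 'a::ring_1 \<Rightarrow> (cell \<Rightarrow> 'a) \<Rightarrow> (cell \<Rightarrow> 'a) \<Rightarrow> cell \<Rightarrow> 'a" where
  "Sop d iu \<gamma> \<gamma>' c = iu * (\<gamma> (Lc d c) * \<gamma>' (Rc d c))"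

text \<open>Product of pairwise commuting factors indexed by a finite set (order irrelevant).\<close>
definition cprod :: "(cell \<Rightarrow> 'b::ring_1) \<Rightarrow> cell set \<Rightarrow> 'b" where
  "cprod f A = foldr (\<lambda>c acc. f c * acc) (SOME xs. set xs = A \<and> distinct xs) 1"

definition Uop :: "nat \<Rightarrow> (cell \<Rightarrow> 'b::ring_1) \<Rightarrow> (cell \<Rightarrow> 'b) \<Rightarrow> cell \<Rightarrow> 'b" where
  "Uop d X Z c = X c * cprod Z {c'. is_cell d (d - 1) c' \<and> cupint d c' c = 1}"

end

theory Submission
  imports Defs
begin

(* Let c, c' be (d-1)-cells perpendicular to the directions i and j. The cochain
   c cup_{d-2} c' is supported on at most one d-cell, and only if i ~= j: the common d-cell
   whose i- and j-facets, chosen by the signs sigma, are c and c'. For i < j these facets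
   are determined by the parities of i and j, and the same parities decide which neighbour
   of a (d-1)-cell is L and which is R. Hence  int c cup c' + int c' cup c  is odd exactly
   when one, but not both, of L(c) = L(c') and R(c) = R(c') holds, which is the parity of
   the sign produced by reordering the four Majorana operators in S_c S_c'. For U the sign
   comes from moving X_c through the Z-string of U_c' (which contains Z_c iff
   int c cup c' = 1) and vice versa. *)

lemma central_scaled_products_commute:
  fixes u a b s :: "'a::ring_1"
  assumes u: "\<And>x. u * x = x * u" and ab: "a * b = b * a * s"
  shows "(u * a) * (u * b) = (u * b) * (u * a) * s"
proof -
  have swap: "(u * x) * (u * y) = u * u * (x * y)" for x y
    by (metis u mult.assoc)
  show ?thesis
    unfolding swap ab by (simp add: mult.assoc)
qed

lemma majorana_bilinears_commute:
  fixes \<gamma> \<gamma>' :: "'c \<Rightarrow> 'a::ring_1"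
  assumes anti: "\<And>C D. C \<in> M \<Longrightarrow> D \<in> M \<Longrightarrow> C \<noteq> D \<Longrightarrow> \<gamma> C * \<gamma> D = - (\<gamma> D * \<gamma> C)"
    and anti': "\<And>C D. C \<in> M \<Longrightarrow> D \<in> M \<Longrightarrow> C \<noteq> D \<Longrightarrow> \<gamma>' C * \<gamma>' D = - (\<gamma>' D * \<gamma>' C)"
    and anti_mixed: "\<And>C D. C \<in> M \<Longrightarrow> D \<in> M \<Longrightarrow> \<gamma> C * \<gamma>' D = - (\<gamma>' D * \<gamma> C)"
    and cells: "A \<in> M" "B \<in> M" "A' \<in> M" "B' \<in> M"
  shows "\<gamma> A * \<gamma>' B * (\<gamma> A' * \<gamma>' B') =
    \<gamma> A' * \<gamma>' B' * (\<gamma> A * \<gamma>' B) * (- 1) ^ (of_bool (A \<noteq> A') + of_bool (B \<noteq> B'))"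
proof -
  define s :: 'a where "s = (- 1) ^ of_bool (A \<noteq> A')"
  define t :: 'a where "t = (- 1) ^ of_bool (B \<noteq> B')"
  have t_central: "x * (t * y) = t * (x * y)" for x y
    by (simp add: t_def minus_one_power_iff)
  have AA': "\<gamma> A * \<gamma> A' = s * (\<gamma> A' * \<gamma> A)"
    using anti[of A A'] cells by (cases "A = A'") (simp_all add: s_def)
  have BB': "\<gamma>' B * \<gamma>' B' = t * (\<gamma>' B' * \<gamma>' B)"
    using anti'[of B B'] cells by (cases "B = B'") (simp_all add: t_def)
  have AB': "\<gamma> A * \<gamma>' B' = - (\<gamma>' B' * \<gamma> A)"
    using anti_mixed[OF cells(1,4)] .
  have BA': "\<gamma>' B * \<gamma> A' = - (\<gamma> A' * \<gamma>' B)"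
    using anti_mixed[OF cells(3,2)] by simp
  have "\<gamma> A * \<gamma>' B * (\<gamma> A' * \<gamma>' B') = \<gamma> A * (\<gamma>' B * \<gamma> A') * \<gamma>' B'"
    by (simp add: mult.assoc)
  also have "\<dots> = - (\<gamma> A * \<gamma> A' * (\<gamma>' B * \<gamma>' B'))"
    by (simp add: BA' mult.assoc)
  also have "\<dots> = - (s * (\<gamma> A' * \<gamma> A) * (t * (\<gamma>' B' * \<gamma>' B)))"
    by (simp only: AA' BB')
  also have "\<dots> = - (s * (t * (\<gamma> A' * (\<gamma> A * \<gamma>' B') * \<gamma>' B)))"
    by (simp add: mult.assoc t_central)
  also have "\<dots> = s * (t * (\<gamma> A' * \<gamma>' B' * (\<gamma> A * \<gamma>' B)))"
    by (simp add: AB' mult.assoc)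
  also have "\<dots> = \<gamma> A' * \<gamma>' B' * (\<gamma> A * \<gamma>' B) * (s * t)"
    by (simp add: s_def t_def minus_one_power_iff)
  finally show ?thesis
    by (simp add: s_def t_def power_add)
qed

lemma prod_list_commute:
  fixes x :: "'a::monoid_mult"
  assumes "\<And>z. z \<in> set zs \<Longrightarrow> x * z = z * x"
  shows "x * prod_list zs = prod_list zs * x"
  using assms by (induction zs) (simp_all, metis mult.assoc)

lemma prod_list_map_mult_anticommute:
  fixes Z :: "'c \<Rightarrow> 'a::ring_1"
  assumes "distinct es" and "\<And>e. e \<in> set es \<Longrightarrow> e \<noteq> a \<Longrightarrow> Z e * x = x * Z e"
    and "Z a * x = - (x * Z a)"
  shows "prod_list (map Z es) * x = (- 1) ^ of_bool (a \<in> set es) * (x * prod_list (map Z es))"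
  using assms(1,2)
proof (induction es)
  case (Cons e es)
  define P where "P = prod_list (map Z es)"
  define s :: 'a where "s = (- 1) ^ of_bool (a \<in> set es)"
  have IH: "P * x = s * (x * P)"
    using Cons by (simp add: P_def s_def)
  show ?case
  proof (cases "e = a")
    case True
    with Cons.prems IH have "P * x = x * P"
      by (simp add: s_def)
    then have "Z e * P * x = Z e * x * P"
      by (simp add: mult.assoc)
    also have "\<dots> = - (x * (Z e * P))"
      using True assms(3) by (simp add: mult.assoc)
    finally show ?thesis
      using True by (simp add: P_def)
  next
    case False
    with Cons.prems have Zx: "Z e * x = x * Z e"
      by simp
    have "Z e * P * x = Z e * (s * (x * P))"
      by (simp add: mult.assoc IH)
    also have "\<dots> = s * (x * (Z e * P))"
      by (simp add: s_def minus_one_power_iff Zx flip: mult.assoc)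
    finally show ?thesis
      using False by (simp add: P_def s_def)
  qed
qed simp

lemma cprod_prod_listE:
  assumes "finite A"
  obtains xs where "set xs = A" "distinct xs" "cprod f A = prod_list (map f xs)"
proof -
  let ?xs = "SOME xs. set xs = A \<and> distinct xs"
  have "set ?xs = A \<and> distinct ?xs"
    using someI_ex[OF finite_distinct_list[OF assms]] .
  moreover have "foldr (\<lambda>c acc. f c * acc) xs 1 = prod_list (map f xs)" for xs
    by (induction xs) simp_all
  ultimately show thesis
    using that[of ?xs] by (simp add: cprod_def)
qed

lemma cprod_mult_anticommute:
  fixes Z :: "cell \<Rightarrow> 'a::ring_1"
  assumes "finite A" and "\<And>e. e \<in> A \<Longrightarrow> e \<noteq> a \<Longrightarrow> Z e * x = x * Z e"
    and "Z a * x = - (x * Z a)"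
  shows "cprod Z A * x = (- 1) ^ of_bool (a \<in> A) * (x * cprod Z A)"
proof -
  obtain es where "set es = A" "distinct es" "cprod Z A = prod_list (map Z es)"
    using cprod_prod_listE[OF assms(1)] .
  then show ?thesis
    using prod_list_map_mult_anticommute[where es = es and a = a and x = x] assms(2,3) by simp
qed

lemma cprod_commute:
  fixes Z :: "cell \<Rightarrow> 'a::ring_1"
  assumes "finite A" "finite B" and "\<And>a b. a \<in> A \<Longrightarrow> b \<in> B \<Longrightarrow> Z a * Z b = Z b * Z a"
  shows "cprod Z A * cprod Z B = cprod Z B * cprod Z A"
proof -
  obtain as where as: "set as = A" "cprod Z A = prod_list (map Z as)"
    using cprod_prod_listE[OF assms(1)] by metis
  obtain bs where bs: "set bs = B" "cprod Z B = prod_list (map Z bs)"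
    using cprod_prod_listE[OF assms(2)] by metis
  have "Z a * prod_list (map Z bs) = prod_list (map Z bs) * Z a" if "a \<in> A" for a
  proof (rule prod_list_commute)
    fix z
    assume "z \<in> set (map Z bs)"
    then obtain b where "b \<in> B" "z = Z b"
      using bs(1) by auto
    then show "Z a * z = z * Z a"
      using assms(3) that by simp
  qed
  then have "prod_list (map Z bs) * prod_list (map Z as) = prod_list (map Z as) * prod_list (map Z bs)"
    using as(1) by (intro prod_list_commute) auto
  then show ?thesis
    using as bs by simp
qed

lemma pauli_strings_commute:
  fixes X Z :: "cell \<Rightarrow> 'a::ring_1"
  assumes XZ_same: "\<And>e. e \<in> E \<Longrightarrow> X e * Z e = - (Z e * X e)"
    and XX_comm: "\<And>e f. e \<in> E \<Longrightarrow> f \<in> E \<Longrightarrow> X e * X f = X f * X e"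
    and ZZ_comm: "\<And>e f. e \<in> E \<Longrightarrow> f \<in> E \<Longrightarrow> Z e * Z f = Z f * Z e"
    and XZ_comm: "\<And>e f. e \<in> E \<Longrightarrow> f \<in> E \<Longrightarrow> e \<noteq> f \<Longrightarrow> X e * Z f = Z f * X e"
    and e: "e \<in> E" and f: "f \<in> E" and A: "finite A" "A \<subseteq> E" and B: "finite B" "B \<subseteq> E"
  shows "X e * cprod Z A * (X f * cprod Z B) =
    X f * cprod Z B * (X e * cprod Z A) * (- 1) ^ (of_bool (e \<in> B) + of_bool (f \<in> A))"
proof -
  define P where "P = cprod Z A"
  define Q where "Q = cprod Z B"
  define s :: 'a where "s = (- 1) ^ of_bool (f \<in> A)"
  define t :: 'a where "t = (- 1) ^ of_bool (e \<in> B)"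
  have ZX_anti: "Z g * X g = - (X g * Z g)" if "g \<in> E" for g
    using XZ_same[OF that] by simp
  have ZX_comm: "Z g * X h = X h * Z g" if "g \<in> E" "h \<in> E" "g \<noteq> h" for g h
    using XZ_comm[OF that(2,1)] that(3) by simp
  have PX: "P * X f = s * (X f * P)"
    unfolding P_def s_def
    by (intro cprod_mult_anticommute ZX_comm ZX_anti A(1)) (use A(2) f in blast)+
  have QX: "Q * X e = t * (X e * Q)"
    unfolding Q_def t_def
    by (intro cprod_mult_anticommute ZX_comm ZX_anti B(1)) (use B(2) e in blast)+
  have PQ: "P * Q = Q * P"
    unfolding P_def Q_def
    by (intro cprod_commute ZZ_comm A(1) B(1)) (use A(2) B(2) in blast)+
  have s_central: "x * (s * y) = s * (x * y)" for x y
    by (simp add: s_def minus_one_power_iff)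
  have t_central: "x * (t * y) = t * (x * y)" for x y
    by (simp add: t_def minus_one_power_iff)
  have "X e * P * (X f * Q) = X e * (P * X f) * Q"
    by (simp add: mult.assoc)
  also have "\<dots> = s * (X e * X f * (P * Q))"
    by (simp add: PX mult.assoc s_central)
  finally have lhs: "X e * P * (X f * Q) = s * (X e * X f * (P * Q))" .
  have "X f * Q * (X e * P) = X f * (Q * X e) * P"
    by (simp add: mult.assoc)
  also have "\<dots> = t * (X f * X e * (Q * P))"
    by (simp add: QX mult.assoc t_central)
  also have "\<dots> = t * (X e * X f * (P * Q))"
    by (simp only: XX_comm[OF f e] PQ)
  finally have rhs: "X f * Q * (X e * P) = t * (X e * X f * (P * Q))" .
  show ?thesis
    unfolding P_def[symmetric] Q_def[symmetric] lhs rhs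
    by (simp add: s_def t_def minus_one_power_iff power_add)
qed

lemma is_cell_top_dim_iff:
  "is_cell d d C \<longleftrightarrow> snd C = {1..d} \<and> (\<forall>i. i \<notin> {1..d} \<longrightarrow> fst C i = 0)"
  unfolding is_cell_def
  by (metis card_atLeastAtMost card_subset_eq diff_Suc_1 finite_atLeastAtMost order_refl)

lemma codim1_cell_perp:
  assumes c: "is_cell d (d - 1) c" and d: "d \<ge> 1"
  shows "perp d c \<in> {1..d}" and "snd c = {1..d} - {perp d c}"
proof -
  have sub: "snd c \<subseteq> {1..d}" and card: "card (snd c) = d - 1"
    using c by (auto simp: is_cell_def)
  have "card ({1..d} - snd c) = 1"
    using sub card d by (simp add: card_Diff_subset finite_subset)
  then obtain i where i: "{1..d} - snd c = {i}"
    by (meson card_1_singletonE)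
  with sub have "i \<in> {1..d}" "snd c = {1..d} - {i}"
    by blast+
  moreover from this have "perp d c = i"
    unfolding perp_def by (intro the_equality) auto
  ultimately show "perp d c \<in> {1..d}" "snd c = {1..d} - {perp d c}"
    by simp_all
qed

definition coface :: "nat \<Rightarrow> cell \<Rightarrow> bool \<Rightarrow> cell" where
  "coface d c b = ((fst c)(perp d c := fst c (perp d c) - of_bool b), {1..d})"

lemma Lc_eq_coface: "Lc d c = coface d c (odd (perp d c + d))"
  and Rc_eq_coface: "Rc d c = coface d c (even (perp d c + d))"
  by (simp_all add: Lc_def Rc_def adj_minus_def adj_plus_def coface_def)

lemma coface_is_cell:
  assumes "is_cell d (d - 1) c" "d \<ge> 1"
  shows "is_cell d d (coface d c b)"
  using assms codim1_cell_perp(1)[OF assms] by (auto simp: is_cell_top_dim_iff coface_def is_cell_def)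

lemma coface_eq_coface_iff:
  assumes "perp d c = perp d c'"
  shows "coface d c b = coface d c' b \<longleftrightarrow> fst c = fst c'"
  using assms by (auto simp: coface_def fun_eq_iff split: if_splits)

lemma subcell_facet_eq_iff:
  assumes C: "is_cell d d C" and c: "is_cell d (d - 1) c" and d: "d \<ge> 1"
  shows "subcell C {perp d c} P = c \<longleftrightarrow> C = coface d c (P (perp d c))"
  using C codim1_cell_perp(2)[OF c d]
  by (cases C, cases c) (auto simp: subcell_def coface_def is_cell_top_dim_iff fun_eq_iff split: if_splits)

lemma cup_ind_ind_top_cell:
  fixes d :: nat and c c' C :: cell
  defines "i \<equiv> perp d c" and "j \<equiv> perp d c'"
  defines "L \<equiv> {1..d} - {i, j}"
  assumes C: "is_cell d d C" and c: "is_cell d (d - 1) c" and c': "is_cell d (d - 1) c'"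
    and d: "d \<ge> 1"
  shows "cup (d - 2) (ind c) (ind c') C =
    of_bool (i \<noteq> j \<and> subcell C {i} (\<lambda>s. even (ell L s)) = c
                   \<and> subcell C {j} (\<lambda>s. odd (ell L s)) = c')"
proof -
  define S where "S = {1..d}"
  define hit where "hit K T \<longleftrightarrow> subcell C T (\<lambda>s. even (ell K s)) = c \<and>
      subcell C (S - K - T) (\<lambda>s. odd (ell K s)) = c'" for K T
  have ij: "i \<in> S" "j \<in> S" "snd c = S - {i}" "snd c' = S - {j}"
    using codim1_cell_perp[OF c d] codim1_cell_perp[OF c' d] by (simp_all add: i_def j_def S_def)
  have snd_subcell: "snd (subcell C T P) = S - T" for T P
    using C by (simp add: subcell_def is_cell_top_dim_iff S_def)
  have hit_iff: "hit K T \<longleftrightarrow> K = L \<and> T = {i} \<and> i \<noteq> j \<and> hit L {i}"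
    if "K \<subseteq> S" "T \<subseteq> S - K" for K T
  proof
    assume h: "hit K T"
    then have "S - T = S - {i}" "S - (S - K - T) = S - {j}"
      using ij snd_subcell unfolding hit_def by metis+
    with that ij(1,2) have "T = {i}" "K = L" "i \<noteq> j"
      by (auto simp: L_def S_def)
    with h show "K = L \<and> T = {i} \<and> i \<noteq> j \<and> hit L {i}"
      by simp
  qed auto
  have ind_mult: "ind c x * ind c' y = of_bool (x = c \<and> y = c')" for x y
    by (simp add: ind_def)
  have L_card: "L \<in> {K. K \<subseteq> S \<and> card K = d - 2}" if "i \<noteq> j"
    using that ij by (auto simp: L_def S_def card_Diff_subset)
  have rest: "S - L - {i} = {j}" if "i \<noteq> j"
    using that ij(1,2) by (auto simp: L_def S_def)
  have "cup (d - 2) (ind c) (ind c') C =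
      (\<Sum>K \<in> {K. K \<subseteq> S \<and> card K = d - 2}. \<Sum>T \<in> Pow (S - K). of_bool (hit K T)) mod 2"
    using C unfolding cup_def ind_mult hit_def is_cell_top_dim_iff S_def by simp
  also have "\<dots> = (\<Sum>K \<in> {K. K \<subseteq> S \<and> card K = d - 2}. \<Sum>T \<in> Pow (S - K).
      if K = L then if T = {i} then of_bool (i \<noteq> j \<and> hit L {i}) else 0 else 0) mod 2"
    by (intro arg_cong[where f = "\<lambda>n. n mod 2"] sum.cong refl) (auto simp: hit_iff)
  also have "\<dots> = (\<Sum>K \<in> {K. K \<subseteq> S \<and> card K = d - 2}.
      if K = L then of_bool (i \<noteq> j \<and> hit L {i}) else 0) mod 2"
    using ij(1) by (intro arg_cong[where f = "\<lambda>n. n mod 2"] sum.cong refl) (auto simp: L_def S_def)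
  also have "\<dots> = of_bool (i \<noteq> j \<and> hit L {i})"
    using L_card by (cases "i = j") (simp_all add: S_def)
  also have "\<dots> = of_bool (i \<noteq> j \<and> subcell C {i} (\<lambda>s. even (ell L s)) = c
      \<and> subcell C {j} (\<lambda>s. odd (ell L s)) = c')"
    using rest unfolding hit_def by (cases "i = j") simp_all
  finally show ?thesis .
qed

lemma cupint_eq_coface:
  fixes d :: nat and c c' :: cell
  defines "i \<equiv> perp d c" and "j \<equiv> perp d c'"
  defines "L \<equiv> {1..d} - {i, j}"
  assumes c: "is_cell d (d - 1) c" and c': "is_cell d (d - 1) c'" and d: "d \<ge> 1"
  shows "cupint d c c' =
    of_bool (i \<noteq> j \<and> coface d c (even (ell L i)) = coface d c' (odd (ell L j)))"
proof -
  define C0 where "C0 = coface d c (even (ell L i))"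
  have "odd (cup (d - 2) (ind c) (ind c') C) \<longleftrightarrow>
      i \<noteq> j \<and> C = C0 \<and> C = coface d c' (odd (ell L j))" if C: "is_cell d d C" for C
    using cup_ind_ind_top_cell[OF C c c' d] subcell_facet_eq_iff[OF C c d] subcell_facet_eq_iff[OF C c' d]
    unfolding i_def j_def L_def C0_def by simp
  then have "{C. is_cell d d C \<and> odd (cup (d - 2) (ind c) (ind c') C)} =
      {C. is_cell d d C \<and> i \<noteq> j \<and> C = C0 \<and> C = coface d c' (odd (ell L j))}"
    by blast
  also have "\<dots> = (if i \<noteq> j \<and> C0 = coface d c' (odd (ell L j)) then {C0} else {})"
    using coface_is_cell[OF c d, of "even (ell L i)"] unfolding C0_def by auto
  finally show ?thesis
    by (simp add: cupint_def integral_d_def C0_def)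
qed

lemma ell_diff_pair:
  assumes "1 \<le> i" "i < j" "j \<le> d"
  shows "ell ({1..d} - {i, j}) i = i - 1" and "ell ({1..d} - {i, j}) j = j - 2"
proof -
  have "{l \<in> {1..d} - {i, j}. l < i} = {1..<i}" and "{l \<in> {1..d} - {i, j}. l < j} = {1..<j} - {i}"
    using assms by auto
  then show "ell ({1..d} - {i, j}) i = i - 1" and "ell ({1..d} - {i, j}) j = j - 2"
    using assms by (simp_all add: ell_def)
qed

lemma cupint_perp_less:
  assumes c: "is_cell d (d - 1) c" and c': "is_cell d (d - 1) c'" and d: "d \<ge> 1"
    and less: "perp d c < perp d c'"
  shows "cupint d c c' = of_bool (coface d c (odd (perp d c)) = coface d c' (odd (perp d c')))"
    and "cupint d c' c = of_bool (coface d c (even (perp d c)) = coface d c' (even (perp d c')))"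
proof -
  have i: "1 \<le> perp d c" and j: "perp d c' \<le> d"
    using codim1_cell_perp(1)[OF c d] codim1_cell_perp(1)[OF c' d] by auto
  note ell = ell_diff_pair[OF i less j]
  have parity: "even (perp d c - 1) \<longleftrightarrow> odd (perp d c)" "even (perp d c' - 2) \<longleftrightarrow> even (perp d c')"
    using i less by (auto simp: even_diff_nat)
  show "cupint d c c' = of_bool (coface d c (odd (perp d c)) = coface d c' (odd (perp d c')))"
    using less unfolding cupint_eq_coface[OF c c' d] ell parity by simp
  show "cupint d c' c = of_bool (coface d c (even (perp d c)) = coface d c' (even (perp d c')))"
    using less unfolding cupint_eq_coface[OF c' c d] insert_commute[of "perp d c'"] ell parity
    by auto
qed

lemma cupint_perp_eq:
  assumes "is_cell d (d - 1) c" "is_cell d (d - 1) c'" "d \<ge> 1" "perp d c = perp d c'"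
  shows "cupint d c c' = 0"
  using assms by (simp add: cupint_eq_coface)

lemma odd_cupint_swap_iff:
  assumes c: "is_cell d (d - 1) c" and c': "is_cell d (d - 1) c'" and d: "d \<ge> 1"
  shows "odd (cupint d c c' + cupint d c' c) \<longleftrightarrow> (Lc d c = Lc d c') \<noteq> (Rc d c = Rc d c')"
proof -
  have less: "odd (cupint d e e' + cupint d e' e) \<longleftrightarrow> (Lc d e = Lc d e') \<noteq> (Rc d e = Rc d e')"
    if e: "is_cell d (d - 1) e" and e': "is_cell d (d - 1) e'" and "perp d e < perp d e'" for e e'
    using cupint_perp_less[OF e e' d \<open>perp d e < perp d e'\<close>]
    by (cases "even d") (auto simp: Lc_eq_coface Rc_eq_coface)
  consider "perp d c < perp d c'" | "perp d c' < perp d c" | "perp d c = perp d c'"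
    by linarith
  then show ?thesis
  proof cases
    case 1
    then show ?thesis using less[OF c c'] by simp
  next
    case 2
    then show ?thesis using less[OF c' c] by (simp add: add.commute eq_commute)
  next
    case 3
    then show ?thesis
      using cupint_perp_eq[OF c c' d] cupint_perp_eq[OF c' c d]
      by (simp add: Lc_eq_coface Rc_eq_coface coface_eq_coface_iff)
  qed
qed

lemma cupint_less_2: "cupint d c c' < 2"
  by (simp add: cupint_def integral_d_def)

lemma finite_cupint_partners:
  assumes c: "is_cell d (d - 1) c" and d: "d \<ge> 1"
  shows "finite {e. is_cell d (d - 1) e \<and> cupint d e c = 1}"
proof -
  have "{e. is_cell d (d - 1) e \<and> cupint d e c = 1} \<subseteq>
      (\<lambda>(C, j, b). subcell C {j} (\<lambda>_. b)) ` ({coface d c False, coface d c True} \<times> {1..d} \<times> UNIV)"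
  proof
    fix e
    assume "e \<in> {e. is_cell d (d - 1) e \<and> cupint d e c = 1}"
    then have e: "is_cell d (d - 1) e" and "cupint d e c = 1"
      by simp_all
    obtain b b' where "coface d e b = coface d c b'"
      using \<open>cupint d e c = 1\<close> unfolding cupint_eq_coface[OF e c d] of_bool_eq_1_iff by blast
    moreover have "subcell (coface d e b) {perp d e} (\<lambda>_. b) = e"
      using subcell_facet_eq_iff[OF coface_is_cell[OF e d] e d] by simp
    moreover have "perp d e \<in> {1..d}"
      using codim1_cell_perp(1)[OF e d] .
    moreover have "coface d c b' \<in> {coface d c False, coface d c True}"
      by (cases b') simp_all
    ultimately show "e \<in> (\<lambda>(C, j, b). subcell C {j} (\<lambda>_. b)) `
        ({coface d c False, coface d c True} \<times> {1..d} \<times> UNIV)"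
      by (intro image_eqI[where x = "(coface d c b', perp d e, b)"]) auto
  qed
  then show ?thesis
    by (rule finite_subset) simp
qed

theorem lemma1:
  fixes d :: nat
    and iu :: "'a::ring_1" and adj :: "'a \<Rightarrow> 'a"
    and \<gamma> \<gamma>' :: "cell \<Rightarrow> 'a"
    and X Z :: "cell \<Rightarrow> 'b::ring_1"
    and c c' :: cell
  assumes d2: "d \<ge> 2"
    (* imaginary unit: central, squares to -1; adjoint: involutive antilinear anti-automorphism *)
    and iu_sq: "iu * iu = -1"
    and iu_central: "\<And>x. iu * x = x * iu"
    and adj_adj: "\<And>x. adj (adj x) = x"
    and adj_add: "\<And>x y. adj (x + y) = adj x + adj y"
    and adj_mult: "\<And>x y. adj (x * y) = adj y * adj x"
    and adj_one: "adj 1 = 1"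
    and adj_iu: "adj iu = - iu"
    (* Majorana operators on d-cells: Hermitian, square to 1, pairwise anticommute *)
    and herm: "\<And>C. is_cell d d C \<Longrightarrow> adj (\<gamma> C) = \<gamma> C"
    and herm': "\<And>C. is_cell d d C \<Longrightarrow> adj (\<gamma>' C) = \<gamma>' C"
    and sq: "\<And>C. is_cell d d C \<Longrightarrow> \<gamma> C * \<gamma> C = 1"
    and sq': "\<And>C. is_cell d d C \<Longrightarrow> \<gamma>' C * \<gamma>' C = 1"
    and anti: "\<And>C D. is_cell d d C \<Longrightarrow> is_cell d d D \<Longrightarrow> C \<noteq> D \<Longrightarrow>
                 \<gamma> C * \<gamma> D = - (\<gamma> D * \<gamma> C)"
    and anti': "\<And>C D. is_cell d d C \<Longrightarrow> is_cell d d D \<Longrightarrow> C \<noteq> D \<Longrightarrow>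
                 \<gamma>' C * \<gamma>' D = - (\<gamma>' D * \<gamma>' C)"
    and anti_mixed: "\<And>C D. is_cell d d C \<Longrightarrow> is_cell d d D \<Longrightarrow>
                 \<gamma> C * \<gamma>' D = - (\<gamma>' D * \<gamma> C)"
    (* Pauli operators on (d-1)-cells *)
    and X_sq: "\<And>e. is_cell d (d - 1) e \<Longrightarrow> X e * X e = 1"
    and Z_sq: "\<And>e. is_cell d (d - 1) e \<Longrightarrow> Z e * Z e = 1"
    and XZ_same: "\<And>e. is_cell d (d - 1) e \<Longrightarrow> X e * Z e = - (Z e * X e)"
    and XX_comm: "\<And>e f. is_cell d (d - 1) e \<Longrightarrow> is_cell d (d - 1) f \<Longrightarrow> X e * X f = X f * X e"
    and ZZ_comm: "\<And>e f. is_cell d (d - 1) e \<Longrightarrow> is_cell d (d - 1) f \<Longrightarrow> Z e * Z f = Z f * Z e"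
    and XZ_comm: "\<And>e f. is_cell d (d - 1) e \<Longrightarrow> is_cell d (d - 1) f \<Longrightarrow> e \<noteq> f \<Longrightarrow>
                   X e * Z f = Z f * X e"
    and c: "is_cell d (d - 1) c" and c': "is_cell d (d - 1) c'"
  shows "(Sop d iu \<gamma> \<gamma>' c * Sop d iu \<gamma> \<gamma>' c'
           = Sop d iu \<gamma> \<gamma>' c' * Sop d iu \<gamma> \<gamma>' c * (-1) ^ (cupint d c c' + cupint d c' c)) \<and>
         (Uop d X Z c * Uop d X Z c'
           = Uop d X Z c' * Uop d X Z c * (-1) ^ (cupint d c c' + cupint d c' c))"
proof -
  have d: "d \<ge> 1"
    using d2 by simp
  define partners where "partners e = {e'. is_cell d (d - 1) e' \<and> cupint d e' e = 1}" for e
  have faces: "is_cell d d (Lc d e)" "is_cell d d (Rc d e)" if "is_cell d (d - 1) e" for e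
    using coface_is_cell[OF that d] by (simp_all add: Lc_eq_coface Rc_eq_coface)
  have sign: "(- 1 :: 'a) ^ (of_bool (Lc d c \<noteq> Lc d c') + of_bool (Rc d c \<noteq> Rc d c')) =
      (- 1) ^ (cupint d c c' + cupint d c' c)"
  proof -
    have "even (of_bool (Lc d c \<noteq> Lc d c') + of_bool (Rc d c \<noteq> Rc d c')) \<longleftrightarrow>
        even (cupint d c c' + cupint d c' c)"
      using odd_cupint_swap_iff[OF c c' d]
      by (cases "Lc d c = Lc d c'"; cases "Rc d c = Rc d c'") simp_all
    then show ?thesis
      by (metis minus_one_power_iff)
  qed
  have "Sop d iu \<gamma> \<gamma>' c * Sop d iu \<gamma> \<gamma>' c' =
      Sop d iu \<gamma> \<gamma>' c' * Sop d iu \<gamma> \<gamma>' c * (- 1) ^ (cupint d c c' + cupint d c' c)"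
    unfolding Sop_def sign[symmetric]
    by (intro central_scaled_products_commute[OF iu_central]
        majorana_bilinears_commute[where M = "{C. is_cell d d C}"])
      (auto intro: anti anti' anti_mixed faces c c')
  moreover have "Uop d X Z c * Uop d X Z c' = Uop d X Z c' * Uop d X Z c *
      (- 1) ^ (of_bool (c \<in> partners c') + of_bool (c' \<in> partners c))"
    unfolding Uop_def partners_def[symmetric]
    using c c' finite_cupint_partners[OF c d] finite_cupint_partners[OF c' d]
    by (intro pauli_strings_commute[where E = "{e. is_cell d (d - 1) e}"]
        XZ_same XX_comm ZZ_comm XZ_comm) (auto simp: partners_def)
  moreover have "of_bool (e \<in> partners e') = cupint d e e'" if "is_cell d (d - 1) e" for e e'
    using that cupint_less_2[of d e e'] by (auto simp: partners_def)
  ultimately show ?thesis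
    using c c' by simp
qed

end
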